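(* Let $(N,\langle\cdot,\cdot\rangle,\varphi)$ be a modified $H$-type group (see context), with $m=\dim\mathfrak v$. The Ricci operator $\mathrm{Rc}$ preserves the splitting $\mathfrak n=\mathfrak z\oplus\mathfrak v$, and $$\mathrm{Rc}|_{\mathfrak v}=-\tfrac{\xi}{2}\,\mathrm{Id}_{\mathfrak v},\qquad \mathrm{Rc}|_{\mathfrak z}=\tfrac m4\,\mathrm{Id}^\dagger_\varphi .$$
   Context: Let $N$ be a 2-step nilpotent real Lie group with Lie algebra $\mathfrak n$, Lie bracket $[\cdot,\cdot]$ and center $\mathfrak z$, endowed with a left-invariant pseudo-Riemannian metric $\langle\cdot,\cdot\rangle$ (identified with an inner product on $\mathfrak n$) for which $\mathfrak z$ is nondegenerate. Put $\mathfrak v=\mathfrak z^\perp$. For $z\in\mathfrak z$ define $j(z)\in\mathrm{End}(\mathfrak v)$ by $\langle [x,y],z\rangle=\langle y,j(z)x\rangle$ for all $x,y\in\mathfrak v$. Given a quadratic form $\varphi$ on $\mathfrak z$, $(N,\langle\cdot,\cdot\rangle,\varphi)$ is a modified $H$-type group if $j(z)^2=-\varphi(z)\,\mathrm{Id}_{\mathfrak v}$ for all $z\in\mathfrak z$. $\langle\cdot,\cdot\rangle_\varphi$ is the polarization of $\varphi$. With $\{z_1,\dots,z_p\}$ a pseudo-orthonormal basis of $\mathfrak z$, $\xi=\sum_{k}\langle z_k,z_k\rangle\varphi(z_k)$. The Ricci operator $\mathrm{Rc}:\mathfrak n\to\mathfrak n$ is defined by $\langle \mathrm{Rc}\,x,y\rangle=\mathrm{Ric}(x,y)$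 for all $x,y\in\mathfrak n$. The operator $\mathrm{Id}^\dagger_\varphi:\mathfrak z\to\mathfrak z$ is defined by $\langle \mathrm{Id}^\dagger_\varphi z,z'\rangle=\langle z,z'\rangle_\varphi$ for all $z,z'\in\mathfrak z$. *)

theory Defs
  imports "HOL-Analysis.Analysis"
begin

text \<open>The Lie algebra n is modelled by a finite-dimensional real vector space 'a
(of class euclidean_space; its Euclidean structure is used only to define the trace).\<close>

definition two_step_nilpotent_lie :: "('a::euclidean_space \<Rightarrow> 'a \<Rightarrow> 'a) \<Rightarrow> bool" where
  "two_step_nilpotent_lie br \<longleftrightarrow>
     bilinear br \<and> (\<forall>x y. br x y = - br y x) \<and>
     (\<forall>x y w. br x (br y w) + br y (br w x) + br w (br x y) = 0) \<and>
     (\<forall>x y w. br (br x y) w = 0) \<and> (\<exists>x y. br x y \<noteq> 0)"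

definition inner_prod :: "('a::euclidean_space \<Rightarrow> 'a \<Rightarrow> real) \<Rightarrow> bool" where
  "inner_prod g \<longleftrightarrow> bilinear g \<and> (\<forall>x y. g x y = g y x) \<and>
     (\<forall>x. (\<forall>y. g x y = 0) \<longrightarrow> x = 0)"

definition center :: "('a::euclidean_space \<Rightarrow> 'a \<Rightarrow> 'a) \<Rightarrow> 'a set" where
  "center br = {x. \<forall>y. br x y = 0}"

definition orth_compl :: "('a \<Rightarrow> 'a \<Rightarrow> real) \<Rightarrow> 'a set \<Rightarrow> 'a set" where
  "orth_compl g S = {x. \<forall>s\<in>S. g x s = 0}"

definition nondegenerate_on :: "('a::euclidean_space \<Rightarrow> 'a \<Rightarrow> real) \<Rightarrow> 'a set \<Rightarrow> bool" where
  "nondegenerate_on g S \<longleftrightarrow> (\<forall>x\<in>S. (\<forall>y\<in>S. g x y = 0) \<longrightarrow> x = 0)"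

definition jmap :: "('a::euclidean_space \<Rightarrow> 'a \<Rightarrow> 'a) \<Rightarrow> ('a \<Rightarrow> 'a \<Rightarrow> real) \<Rightarrow> 'a \<Rightarrow> 'a \<Rightarrow> 'a" where
  "jmap br g z x = (THE w. w \<in> orth_compl g (center br) \<and>
      (\<forall>y\<in>orth_compl g (center br). g (br x y) z = g y w))"

definition quadratic_form_on :: "'a::euclidean_space set \<Rightarrow> ('a \<Rightarrow> real) \<Rightarrow> bool" where
  "quadratic_form_on S \<phi> \<longleftrightarrow> (\<exists>B. bilinear B \<and> (\<forall>x y. B x y = B y x) \<and> (\<forall>z\<in>S. \<phi> z = B z z))"

definition modified_H_type :: "('a::euclidean_space \<Rightarrow> 'a \<Rightarrow> 'a) \<Rightarrow> ('a \<Rightarrow> 'a \<Rightarrow> real) \<Rightarrow> ('a \<Rightarrow> real) \<Rightarrow> bool" where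
  "modified_H_type br g \<phi> \<longleftrightarrow>
     two_step_nilpotent_lie br \<and> inner_prod g \<and> nondegenerate_on g (center br) \<and>
     quadratic_form_on (center br) \<phi> \<and>
     (\<forall>z\<in>center br. \<forall>x\<in>orth_compl g (center br). jmap br g z (jmap br g z x) = - \<phi> z *\<^sub>R x)"

definition polar :: "('a::euclidean_space \<Rightarrow> real) \<Rightarrow> 'a \<Rightarrow> 'a \<Rightarrow> real" where
  "polar \<phi> z z' = (\<phi> (z + z') - \<phi> z - \<phi> z') / 2"

definition Id_dagger :: "('a::euclidean_space \<Rightarrow> 'a \<Rightarrow> 'a) \<Rightarrow> ('a \<Rightarrow> 'a \<Rightarrow> real) \<Rightarrow> ('a \<Rightarrow> real) \<Rightarrow> 'a \<Rightarrow> 'a" where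
  "Id_dagger br g \<phi> z = (THE w. w \<in> center br \<and> (\<forall>z'\<in>center br. g w z' = polar \<phi> z z'))"

definition pseudo_orthonormal_basis :: "('a::euclidean_space \<Rightarrow> 'a \<Rightarrow> real) \<Rightarrow> 'a set \<Rightarrow> 'a set \<Rightarrow> bool" where
  "pseudo_orthonormal_basis g S B \<longleftrightarrow> B \<subseteq> S \<and> independent B \<and> span B = span S \<and>
     (\<forall>u\<in>B. g u u = 1 \<or> g u u = -1) \<and> (\<forall>u\<in>B. \<forall>u'\<in>B. u \<noteq> u' \<longrightarrow> g u u' = 0)"

text \<open>Levi-Civita connection of the left-invariant metric (Koszul formula):
  2 g(nabla_x y, u) = g([x,y],u) - g([y,u],x) + g([u,x],y).\<close>
definition lc_conn :: "('a::euclidean_space \<Rightarrow> 'a \<Rightarrow> 'a) \<Rightarrow> ('a \<Rightarrow> 'a \<Rightarrow> real) \<Rightarrow> 'a \<Rightarrow> 'a \<Rightarrow> 'a" where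
  "lc_conn br g x y = (THE w. \<forall>u. 2 * g w u = g (br x y) u - g (br y u) x + g (br u x) y)"

definition curv :: "('a::euclidean_space \<Rightarrow> 'a \<Rightarrow> 'a) \<Rightarrow> ('a \<Rightarrow> 'a \<Rightarrow> real) \<Rightarrow> 'a \<Rightarrow> 'a \<Rightarrow> 'a \<Rightarrow> 'a" where
  "curv br g x y w = lc_conn br g x (lc_conn br g y w) - lc_conn br g y (lc_conn br g x w)
      - lc_conn br g (br x y) w"

definition lin_trace :: "('a::euclidean_space \<Rightarrow> 'a) \<Rightarrow> real" where
  "lin_trace f = (\<Sum>e\<in>Basis. inner (f e) e)"

definition ricci :: "('a::euclidean_space \<Rightarrow> 'a \<Rightarrow> 'a) \<Rightarrow> ('a \<Rightarrow> 'a \<Rightarrow> real) \<Rightarrow> 'a \<Rightarrow> 'a \<Rightarrow> real" where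
  "ricci br g x y = lin_trace (\<lambda>w. curv br g w x y)"

definition ricci_op :: "('a::euclidean_space \<Rightarrow> 'a \<Rightarrow> 'a) \<Rightarrow> ('a \<Rightarrow> 'a \<Rightarrow> real) \<Rightarrow> 'a \<Rightarrow> 'a" where
  "ricci_op br g x = (THE w. \<forall>y. g w y = ricci br g x y)"

end

(* The Koszul formula expresses the Levi-Civita connection of a 2-step nilpotent metric Lie
   algebra through the bracket and the maps j(z); taking traces of the resulting curvature gives
     Ric(x, y) = 1/2 sum_k eps_k <x, j(z_k)^2 y> - 1/4 tr (j(x) j(y)),
   where z_k is a pseudo-orthonormal basis of the centre, eps_k = <z_k, z_k>, and j(x) only depends
   on the central component of x.  For a modified H-type group j(z)^2 = -phi(z) on v, so the first
   term is -xi/2 <x, y_v>.  Polarising, j(z) j(z') + j(z') j(z) = -2 <z, z'>_phi on v; the two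
   products are adjoint to each other, hence have the same trace, so tr (j(z) j(z')) = -m <z, z'>_phi. *)

theory Submission
  imports Defs
begin

lemma bilinear_sum_left: "bilinear h \<Longrightarrow> h (sum f S) y = (\<Sum>i\<in>S. h (f i) y)"
  using linear_sum[of "\<lambda>x. h x y"] by (simp add: bilinear_def)

lemma bilinear_sum_right: "bilinear h \<Longrightarrow> h y (sum f S) = (\<Sum>i\<in>S. h y (f i))"
  using linear_sum[of "\<lambda>x. h y x"] by (simp add: bilinear_def)

lemma lin_trace_add: "lin_trace (\<lambda>a. f a + h a) = lin_trace f + lin_trace h"
  unfolding lin_trace_def by (simp add: inner_add_left sum.distrib)

lemma lin_trace_diff: "lin_trace (\<lambda>a. f a - h a) = lin_trace f - lin_trace h"
  unfolding lin_trace_def by (simp add: inner_diff_left sum_subtractf)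

lemma lin_trace_scaleR: "lin_trace (\<lambda>a. c *\<^sub>R f a) = c * lin_trace f"
  unfolding lin_trace_def by (simp add: sum_distrib_left)

lemma lin_trace_minus: "lin_trace (\<lambda>a. - f a) = - lin_trace f"
  unfolding lin_trace_def by (simp add: sum_negf)

lemma lin_trace_id: "lin_trace (\<lambda>a::'a::euclidean_space. a) = real DIM('a)"
  unfolding lin_trace_def by simp

lemma lin_trace_sum_rank_one:
  assumes "finite K" and "\<And>k. k \<in> K \<Longrightarrow> linear (l k)"
  shows "lin_trace (\<lambda>a. \<Sum>k\<in>K. l k a *\<^sub>R u k) = (\<Sum>k\<in>K. l k (u k))"
proof -
  have "lin_trace (\<lambda>a. \<Sum>k\<in>K. l k a *\<^sub>R u k) = (\<Sum>k\<in>K. \<Sum>e\<in>Basis. inner (u k) e * l k e)"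
    unfolding lin_trace_def by (subst sum.swap) (simp add: inner_sum_left mult.commute)
  also have "\<dots> = (\<Sum>k\<in>K. l k (u k))"
  proof (rule sum.cong[OF refl])
    fix k assume "k \<in> K"
    have "l k (u k) = l k (\<Sum>e\<in>Basis. inner (u k) e *\<^sub>R e)"
      by (simp add: euclidean_representation)
    also have "\<dots> = (\<Sum>e\<in>Basis. inner (u k) e * l k e)"
      using assms(2)[OF \<open>k \<in> K\<close>] by (simp add: linear_sum linear_scale)
    finally show "(\<Sum>e\<in>Basis. inner (u k) e * l k e) = l k (u k)" ..
  qed
  finally show ?thesis .
qed

lemma inner_prod_bilinear: "inner_prod g \<Longrightarrow> bilinear g"
  by (simp add: inner_prod_def)

lemma inner_prod_sym: "inner_prod g \<Longrightarrow> g x y = g y x"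
  by (simp add: inner_prod_def)

lemma inner_prod_nondegenerate: "inner_prod g \<Longrightarrow> (\<And>y. g x y = 0) \<Longrightarrow> x = 0"
  by (simp add: inner_prod_def)

lemma inner_prod_eqI:
  assumes "inner_prod g" and "\<And>y. g v y = g w y"
  shows "v = w"
proof -
  have "g (v - w) y = 0" for y
    using assms(2) by (simp add: bilinear_lsub[OF inner_prod_bilinear[OF assms(1)]])
  then have "v - w = 0"
    by (rule inner_prod_nondegenerate[OF assms(1)])
  then show ?thesis by simp
qed

lemma inner_prod_represents_linear:
  assumes g: "inner_prod g" and l: "linear l"
  shows "\<exists>d. \<forall>u. g u d = l u"
proof -
  note bil = inner_prod_bilinear[OF g] and sym = inner_prod_sym[OF g]
  define G where "G d = (\<Sum>e\<in>Basis. g e d *\<^sub>R e)" for d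
  have g_G: "g u d = inner u (G d)" for u d
  proof -
    have "g u d = g (\<Sum>e\<in>Basis. inner u e *\<^sub>R e) d"
      by (simp add: euclidean_representation)
    then show ?thesis
      by (simp add: G_def bilinear_sum_left[OF bil] bilinear_lmul[OF bil] inner_sum_right
          mult.commute)
  qed
  have "linear G" unfolding G_def
    by (rule linearI)
      (simp_all add: bilinear_radd[OF bil] bilinear_rmul[OF bil] scaleR_add_left sum.distrib
        scaleR_sum_right)
  moreover have "inj G"
    unfolding linear_injective_0[OF \<open>linear G\<close>]
  proof (intro allI impI)
    fix x assume "G x = 0"
    then have "g x u = 0" for u
      using g_G sym by simp
    then show "x = 0"
      by (rule inner_prod_nondegenerate[OF g])
  qed
  ultimately obtain d where "G d = adjoint l 1"
    by (metis linear_injective_imp_surjective surjD)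
  then have "g u d = l u" for u
    using g_G adjoint_works[OF l, of u 1] by simp
  then show ?thesis by blast
qed

lemma lin_trace_eq_adjoint:
  assumes g: "inner_prod g" and h: "linear h" and adj: "\<And>x y. g (f x) y = g x (h y)"
  shows "lin_trace f = lin_trace h"
proof -
  note bil = inner_prod_bilinear[OF g] and sym = inner_prod_sym[OF g]
  have "\<forall>e. \<exists>d. \<forall>u. g u d = inner u e"
    using inner_prod_represents_linear[OF g] bounded_linear_inner_left bounded_linear.linear
    by blast
  then obtain d where d: "\<And>e u. g u (d e) = inner u e"
    by metis
  \<comment> \<open>\<open>d\<close> is the \<open>g\<close>-dual of the Euclidean basis, so \<open>tr f = \<Sum>\<^sub>e g (f e) (d e)\<close>.\<close>
  have d_sym: "inner (d e) e' = inner (d e') e" for e e'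
    using d[of "d e" e'] d[of "d e'" e] sym[of "d e" "d e'"] by simp
  have g_expand: "g x y = (\<Sum>e\<in>Basis. inner y e * g x e)" for x y
  proof -
    have "g x y = g x (\<Sum>e\<in>Basis. inner y e *\<^sub>R e)"
      by (simp add: euclidean_representation)
    then show ?thesis
      by (simp add: bilinear_sum_right[OF bil] bilinear_rmul[OF bil])
  qed
  have h_expand: "g x (h y) = (\<Sum>e\<in>Basis. inner y e * g x (h e))" for x y
  proof -
    have "h y = h (\<Sum>e\<in>Basis. inner y e *\<^sub>R e)"
      by (simp add: euclidean_representation)
    also have "\<dots> = (\<Sum>e\<in>Basis. inner y e *\<^sub>R h e)"
      using h by (simp add: linear_sum linear_scale)
    finally have "h y = (\<Sum>e\<in>Basis. inner y e *\<^sub>R h e)" .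
    then show ?thesis
      by (simp add: bilinear_sum_right[OF bil] bilinear_rmul[OF bil])
  qed
  have "lin_trace f = (\<Sum>e\<in>Basis. g e (h (d e)))"
    unfolding lin_trace_def by (simp add: d[symmetric] adj)
  also have "\<dots> = (\<Sum>e\<in>Basis. \<Sum>e'\<in>Basis. inner (d e) e' * g e (h e'))"
    by (rule sum.cong[OF refl]) (rule h_expand)
  also have "\<dots> = (\<Sum>e'\<in>Basis. \<Sum>e\<in>Basis. inner (d e') e * g (h e') e)"
    by (subst sum.swap) (simp add: d_sym sym)
  also have "\<dots> = (\<Sum>e'\<in>Basis. g (h e') (d e'))"
    by (simp add: g_expand[of _ "d _"])
  also have "\<dots> = lin_trace h"
    unfolding lin_trace_def using d by simp
  finally show ?thesis .
qed

lemma lin_trace_skew_adjoint: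
  assumes "inner_prod g" and "linear f" and "\<And>x y. g (f x) y = - g x (f y)"
  shows "lin_trace f = 0"
proof -
  have "lin_trace f = lin_trace (\<lambda>a. - f a)"
    using assms bilinear_rneg[OF inner_prod_bilinear[OF assms(1)]]
    by (intro lin_trace_eq_adjoint[OF assms(1)]) (auto simp: linear_compose_neg)
  then show ?thesis
    using lin_trace_minus[of f] by simp
qed

locale metric_two_step_nilpotent =
  fixes br :: "'a::euclidean_space \<Rightarrow> 'a \<Rightarrow> 'a" and g :: "'a \<Rightarrow> 'a \<Rightarrow> real" and Zb :: "'a set"
  assumes lie: "two_step_nilpotent_lie br"
    and metric: "inner_prod g"
    and center_basis: "pseudo_orthonormal_basis g (center br) Zb"
begin

abbreviation "Z \<equiv> center br"
abbreviation "V \<equiv> orth_compl g Z"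
abbreviation "J \<equiv> jmap br g"

lemma bilinear_br: "bilinear br"
  using lie unfolding two_step_nilpotent_lie_def by blast

lemma br_antisym: "br x y = - br y x"
  using lie unfolding two_step_nilpotent_lie_def by blast

lemma br_in_center [simp]: "br x y \<in> Z"
  using lie unfolding two_step_nilpotent_lie_def center_def by blast

lemma br_center_left: "z \<in> Z \<Longrightarrow> br z y = 0"
  by (simp add: center_def)

lemma br_center_right: "z \<in> Z \<Longrightarrow> br y z = 0"
  using br_antisym br_center_left by (metis neg_equal_0_iff_equal)

lemma linear_br_left: "linear (\<lambda>a. br a y)"
  using bilinear_br by (simp add: bilinear_def)

lemma linear_br_right: "linear (br x)"
  using bilinear_br by (simp add: bilinear_def)

lemma br_br_left [simp]: "br (br x y) w = 0"
  by (simp add: br_center_left)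

lemma br_br_right [simp]: "br w (br x y) = 0"
  by (simp add: br_center_right)

lemmas bilinear_g = inner_prod_bilinear[OF metric]
lemmas g_sym = inner_prod_sym[OF metric]

lemmas br_simps = bilinear_ladd[OF bilinear_br] bilinear_radd[OF bilinear_br]
  bilinear_lmul[OF bilinear_br] bilinear_rmul[OF bilinear_br]
  bilinear_lneg[OF bilinear_br] bilinear_rneg[OF bilinear_br]
  bilinear_lsub[OF bilinear_br] bilinear_rsub[OF bilinear_br]
  bilinear_lzero[OF bilinear_br] bilinear_rzero[OF bilinear_br]

lemmas g_simps = bilinear_ladd[OF bilinear_g] bilinear_radd[OF bilinear_g]
  bilinear_lmul[OF bilinear_g] bilinear_rmul[OF bilinear_g]
  bilinear_lneg[OF bilinear_g] bilinear_rneg[OF bilinear_g]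
  bilinear_lsub[OF bilinear_g] bilinear_rsub[OF bilinear_g]
  bilinear_lzero[OF bilinear_g] bilinear_rzero[OF bilinear_g]

lemma subspace_center: "subspace Z"
  unfolding subspace_def center_def by (auto simp: br_simps)

lemma subspace_V: "subspace V"
  unfolding subspace_def orth_compl_def by (auto simp: g_simps)

lemma g_V_center: "v \<in> V \<Longrightarrow> z \<in> Z \<Longrightarrow> g v z = 0"
  by (simp add: orth_compl_def)

lemma g_center_V: "z \<in> Z \<Longrightarrow> v \<in> V \<Longrightarrow> g z v = 0"
  using g_V_center g_sym by metis

lemma Zb_subset_center: "u \<in> Zb \<Longrightarrow> u \<in> Z"
  using center_basis by (auto simp: pseudo_orthonormal_basis_def)

lemma finite_Zb: "finite Zb"
  using center_basis finiteI_independent by (auto simp: pseudo_orthonormal_basis_def)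

lemma span_Zb: "span Zb = Z"
  using center_basis subspace_center by (simp add: pseudo_orthonormal_basis_def)

lemma Zb_sign_square: "u \<in> Zb \<Longrightarrow> g u u * g u u = 1"
  using center_basis by (auto simp: pseudo_orthonormal_basis_def)

lemma Zb_orthogonal: "u \<in> Zb \<Longrightarrow> u' \<in> Zb \<Longrightarrow> u \<noteq> u' \<Longrightarrow> g u u' = 0"
  using center_basis by (auto simp: pseudo_orthonormal_basis_def)

text \<open>Since \<open>g k k\<close> is the sign \<open>\<plusminus>1\<close> of the basis vector \<open>k\<close>, this is the
  \<open>g\<close>-orthogonal projection onto the centre along \<open>V\<close>.\<close>

definition proj_Z :: "'a \<Rightarrow> 'a" where
  "proj_Z x = (\<Sum>k\<in>Zb. (g k k * g x k) *\<^sub>R k)"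

definition proj_V :: "'a \<Rightarrow> 'a" where
  "proj_V x = x - proj_Z x"

lemma linear_proj_Z: "linear proj_Z"
  unfolding proj_Z_def
  by (rule linearI) (simp_all add: g_simps algebra_simps scaleR_sum_right sum.distrib scaleR_add_left)

lemma linear_proj_V: "linear proj_V"
  unfolding proj_V_def[abs_def] by (rule linear_compose_sub[OF linear_ident linear_proj_Z])

lemma proj_Z_in_center [simp]: "proj_Z x \<in> Z"
  unfolding proj_Z_def span_Zb[symmetric] by (intro span_sum span_scale span_base)

lemma proj_Z_plus_proj_V: "proj_Z x + proj_V x = x"
  by (simp add: proj_V_def)

lemma g_proj_Z_basis:
  assumes "k \<in> Zb"
  shows "g (proj_Z x) k = g x k"
proof -
  have "g (proj_Z x) k = g k k * g x k * g k k + (\<Sum>j\<in>Zb-{k}. g j j * g x j * g j k)"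
    using finite_Zb assms
    by (simp add: proj_Z_def bilinear_sum_left[OF bilinear_g] g_simps sum.remove)
  also have "(\<Sum>j\<in>Zb-{k}. g j j * g x j * g j k) = 0"
    using Zb_orthogonal assms by (intro sum.neutral) auto
  finally show ?thesis
    using Zb_sign_square[OF assms] by (simp add: algebra_simps)
qed

lemma proj_Z_basis:
  assumes "k \<in> Zb"
  shows "proj_Z k = k"
proof -
  have "proj_Z k = (g k k * g k k) *\<^sub>R k + (\<Sum>j\<in>Zb-{k}. (g j j * g k j) *\<^sub>R j)"
    using finite_Zb assms by (simp add: proj_Z_def sum.remove)
  also have "(\<Sum>j\<in>Zb-{k}. (g j j * g k j) *\<^sub>R j) = 0"
    using Zb_orthogonal assms by (intro sum.neutral) auto
  finally show ?thesis
    using Zb_sign_square[OF assms] by simp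
qed

lemma proj_V_center: "z \<in> Z \<Longrightarrow> proj_V z = 0"
  using linear_eq_0_on_span[OF linear_proj_V, of Zb z] proj_Z_basis span_Zb
  by (simp add: proj_V_def)

lemma proj_Z_center: "z \<in> Z \<Longrightarrow> proj_Z z = z"
  using proj_V_center by (simp add: proj_V_def)

lemma proj_V_in_V [simp]: "proj_V x \<in> V"
proof -
  have "linear (\<lambda>s. g (proj_V x) s)"
    using bilinear_g by (simp add: bilinear_def)
  then have "g (proj_V x) s = 0" if "s \<in> Z" for s
    using linear_eq_0_on_span[of "\<lambda>s. g (proj_V x) s" Zb s] that span_Zb
    by (simp add: proj_V_def g_simps g_proj_Z_basis)
  then show ?thesis
    unfolding orth_compl_def by blast
qed

lemma center_nondegenerateD:
  assumes "z \<in> Z" and "\<And>y. y \<in> Z \<Longrightarrow> g z y = 0"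
  shows "z = 0"
proof -
  have "proj_Z z = 0"
    unfolding proj_Z_def using assms(2) Zb_subset_center by (intro sum.neutral) auto
  then show ?thesis
    using proj_Z_center[OF assms(1)] by simp
qed

lemma proj_Z_V: "v \<in> V \<Longrightarrow> proj_Z v = 0"
  unfolding proj_Z_def using g_V_center Zb_subset_center by (intro sum.neutral) auto

lemma proj_V_V: "v \<in> V \<Longrightarrow> proj_V v = v"
  by (simp add: proj_V_def proj_Z_V)

lemma g_proj_V_left: "g (proj_V x) y = g (proj_V x) (proj_V y)"
  using proj_Z_plus_proj_V[of y] g_V_center[OF proj_V_in_V proj_Z_in_center]
  by (metis add_0 bilinear_radd[OF bilinear_g])

lemma g_proj_V: "g (proj_V x) y = g x (proj_V y)"
  using g_proj_V_left g_sym by metis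

lemma V_eqI:
  assumes "v \<in> V" and "w \<in> V" and "\<And>y. y \<in> V \<Longrightarrow> g y v = g y w"
  shows "v = w"
proof (rule inner_prod_eqI[OF metric])
  fix y
  have "g v y = g (proj_V y) v" and "g w y = g (proj_V y) w"
    using assms(1,2) g_proj_V_left[of v y] g_proj_V_left[of w y] g_sym by (metis proj_V_V)+
  then show "g v y = g w y"
    using assms(3)[OF proj_V_in_V] by simp
qed

lemma jmap_eq_proj_V:
  assumes d: "\<And>u. g u d = g (br x u) z"
  shows "J z x = proj_V d"
  unfolding jmap_def
proof (rule the_equality)
  have "g (br x y) z = g y (proj_V d)" if "y \<in> V" for y
    using d[of y] g_proj_V[of y d] that by (simp add: proj_V_V)
  then show "proj_V d \<in> V \<and> (\<forall>y\<in>V. g (br x y) z = g y (proj_V d))"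
    by simp
  fix w assume "w \<in> V \<and> (\<forall>y\<in>V. g (br x y) z = g y w)"
  with \<open>\<And>y. y \<in> V \<Longrightarrow> g (br x y) z = g y (proj_V d)\<close> show "w = proj_V d"
    by (intro V_eqI) auto
qed

lemma
  shows jmap_in_V [simp]: "J z x \<in> V"
    and g_jmap: "g u (J z x) = g (br x u) z"
proof -
  have "linear (\<lambda>u. g (br x u) z)"
    by (rule linearI) (simp_all add: br_simps g_simps)
  then obtain d where d: "\<And>u. g u d = g (br x u) z"
    using inner_prod_represents_linear[OF metric] by blast
  have "br x u = br x (proj_V u)"
    using proj_Z_plus_proj_V[of u] by (metis add_0 br_simps(2) br_center_right proj_Z_in_center)
  then have "g u (proj_V d) = g (br x u) z"
    using d[of "proj_V u"] g_proj_V[of u d] g_sym by metis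
  then show "J z x \<in> V" and "g u (J z x) = g (br x u) z"
    using jmap_eq_proj_V[OF d] by simp_all
qed

lemma jmap_eqI: "(\<And>u. g u w = g (br x u) z) \<Longrightarrow> J z x = w"
  by (rule inner_prod_eqI[OF metric]) (metis g_jmap g_sym)

lemma bilinear_jmap: "bilinear J"
  unfolding bilinear_def
proof (intro conjI allI)
  fix z show "linear (\<lambda>x. J z x)"
    by (rule linearI; rule jmap_eqI) (simp_all add: g_simps br_simps g_jmap)
next
  fix x show "linear (\<lambda>z. J z x)"
    by (rule linearI; rule jmap_eqI) (simp_all add: g_simps br_simps g_jmap)
qed

lemma linear_jmap: "linear (J z)"
  using bilinear_jmap by (simp add: bilinear_def)

lemmas jmap_simps = bilinear_ladd[OF bilinear_jmap] bilinear_radd[OF bilinear_jmap]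
  bilinear_lmul[OF bilinear_jmap] bilinear_rmul[OF bilinear_jmap]
  bilinear_lneg[OF bilinear_jmap] bilinear_rneg[OF bilinear_jmap]
  bilinear_lsub[OF bilinear_jmap] bilinear_rsub[OF bilinear_jmap]
  bilinear_lzero[OF bilinear_jmap] bilinear_rzero[OF bilinear_jmap]

lemma jmap_center_right: "x \<in> Z \<Longrightarrow> J z x = 0"
  by (rule jmap_eqI) (simp add: br_center_left g_simps)

lemma jmap_V_left: "z \<in> V \<Longrightarrow> J z x = 0"
  by (rule jmap_eqI) (simp add: g_simps g_center_V)

lemma jmap_br [simp]: "J z (br x y) = 0"
  by (simp add: jmap_center_right)

lemma jmap_jmap_left [simp]: "J (J z x) y = 0"
  by (simp add: jmap_V_left)

lemma jmap_skew: "g (J z x) u = - g x (J z u)"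
  by (metis g_jmap g_sym br_antisym bilinear_lneg[OF bilinear_g])

lemma jmap_proj_Z_left: "J (proj_Z z) x = J z x"
  using proj_Z_plus_proj_V[of z] jmap_V_left[OF proj_V_in_V]
  by (metis add_0_right jmap_simps(1))

lemma jmap_proj_V_right: "J z (proj_V x) = J z x"
  using proj_Z_plus_proj_V[of x] jmap_center_right[OF proj_Z_in_center]
  by (metis add_0 jmap_simps(2))

lemma jmap_expand: "J a u = (\<Sum>k\<in>Zb. (g k k * g a k) *\<^sub>R J k u)"
  using jmap_proj_Z_left[of a u]
  by (simp add: proj_Z_def bilinear_sum_left[OF bilinear_jmap] jmap_simps)

lemma lc_conn_eq: "lc_conn br g x y = (1/2) *\<^sub>R br x y - (1/2) *\<^sub>R J y x - (1/2) *\<^sub>R J x y"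
  unfolding lc_conn_def
proof (rule the_equality)
  have koszul: "2 * g ((1/2) *\<^sub>R br x y - (1/2) *\<^sub>R J y x - (1/2) *\<^sub>R J x y) u
      = g (br x y) u - g (br y u) x + g (br u x) y" for u
  proof -
    have "g (J y x) u = - g (br u x) y"
      using g_jmap[of u y x] g_sym br_antisym[of x u] by (simp add: g_simps)
    moreover have "g (J x y) u = g (br y u) x"
      using g_jmap[of u x y] g_sym by simp
    ultimately show ?thesis
      by (simp add: g_simps algebra_simps)
  qed
  then show "\<forall>u. 2 * g ((1/2) *\<^sub>R br x y - (1/2) *\<^sub>R J y x - (1/2) *\<^sub>R J x y) u
      = g (br x y) u - g (br y u) x + g (br u x) y" ..
  fix w assume "\<forall>u. 2 * g w u = g (br x y) u - g (br y u) x + g (br u x) y"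
  then have "2 * g w u = 2 * g ((1/2) *\<^sub>R br x y - (1/2) *\<^sub>R J y x - (1/2) *\<^sub>R J x y) u" for u
    using koszul by simp
  then show "w = (1/2) *\<^sub>R br x y - (1/2) *\<^sub>R J y x - (1/2) *\<^sub>R J x y"
    by (intro inner_prod_eqI[OF metric]) simp
qed

lemma lc_conn_lc_conn: "lc_conn br g a (lc_conn br g b c) =
   - (1/4) *\<^sub>R br a (J c b) - (1/4) *\<^sub>R br a (J b c) - (1/4) *\<^sub>R J (br b c) a
   + (1/4) *\<^sub>R J a (J c b) + (1/4) *\<^sub>R J a (J b c)"
  unfolding lc_conn_eq by (simp add: br_simps jmap_simps algebra_simps)

lemma lc_conn_br_left: "lc_conn br g (br a b) c = - (1/2) *\<^sub>R J (br a b) c"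
  unfolding lc_conn_eq by simp

lemma curv_eq: "curv br g a b c =
   - (1/4) *\<^sub>R br a (J c b) - (1/4) *\<^sub>R br a (J b c) - (1/4) *\<^sub>R J (br b c) a
   + (1/4) *\<^sub>R J a (J c b) + (1/4) *\<^sub>R J a (J b c)
   + (1/4) *\<^sub>R br b (J c a) + (1/4) *\<^sub>R br b (J a c) + (1/4) *\<^sub>R J (br a c) b
   - (1/4) *\<^sub>R J b (J c a) - (1/4) *\<^sub>R J b (J a c) + (1/2) *\<^sub>R J (br a b) c"
  unfolding curv_def lc_conn_lc_conn lc_conn_br_left by (simp add: algebra_simps)

lemma linear_g_left_scaled: "linear f \<Longrightarrow> linear (\<lambda>a. c * g (f a) k)"
  by (rule linearI) (simp_all add: linear_add linear_scale g_simps algebra_simps)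

lemma lin_trace_center_valued:
  assumes "linear f" and "\<And>a. f a \<in> Z"
  shows "lin_trace f = (\<Sum>k\<in>Zb. g k k * g (f k) k)"
proof -
  have "lin_trace f = lin_trace (\<lambda>a. \<Sum>k\<in>Zb. (g k k * g (f a) k) *\<^sub>R k)"
    using proj_Z_center[OF assms(2)] by (simp add: proj_Z_def)
  also have "\<dots> = (\<Sum>k\<in>Zb. g k k * g (f k) k)"
    by (rule lin_trace_sum_rank_one[OF finite_Zb linear_g_left_scaled[OF assms(1)]])
  finally show ?thesis .
qed

lemma lin_trace_jmap_compose:
  assumes "linear f" and "linear h"
  shows "lin_trace (\<lambda>a. h (J (f a) u)) = (\<Sum>k\<in>Zb. g k k * g (f (h (J k u))) k)"
proof -
  have "h (J (f a) u) = (\<Sum>k\<in>Zb. (g k k * g (f a) k) *\<^sub>R h (J k u))" for a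
    using jmap_expand[of "f a" u] assms(2) by (simp add: linear_sum linear_scale)
  then have "lin_trace (\<lambda>a. h (J (f a) u))
      = lin_trace (\<lambda>a. \<Sum>k\<in>Zb. (g k k * g (f a) k) *\<^sub>R h (J k u))"
    by simp
  also have "\<dots> = (\<Sum>k\<in>Zb. g k k * g (f (h (J k u))) k)"
    by (rule lin_trace_sum_rank_one[OF finite_Zb linear_g_left_scaled[OF assms(1)]])
  finally show ?thesis .
qed

lemma lin_trace_br_left: "lin_trace (\<lambda>a. br a u) = 0"
proof -
  from lin_trace_center_valued[OF linear_br_left] show ?thesis
    by (simp add: br_center_left Zb_subset_center g_simps)
qed

lemma lin_trace_br_jmap_right: "lin_trace (\<lambda>a. br b (J c a)) = 0"
proof -
  have "linear (\<lambda>a. br b (J c a))"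
    by (rule linearI) (simp_all add: jmap_simps br_simps)
  from lin_trace_center_valued[OF this] show ?thesis
    by (simp add: jmap_center_right Zb_subset_center br_simps g_simps)
qed

lemma lin_trace_jmap_left_V:
  assumes "linear h" and "\<And>v. v \<in> V \<Longrightarrow> h v \<in> V"
  shows "lin_trace (\<lambda>a. h (J a u)) = 0"
proof -
  have "g (h (J k u)) k = 0" if "k \<in> Zb" for k
    using assms(2)[OF jmap_in_V] g_V_center Zb_subset_center that by blast
  then show ?thesis
    using lin_trace_jmap_compose[OF linear_ident assms(1), of u] by simp
qed

lemma lin_trace_jmap_right: "lin_trace (J w) = 0"
  by (rule lin_trace_skew_adjoint[OF metric linear_jmap]) (rule jmap_skew)

lemma lin_trace_br_jmap_left:
  "lin_trace (\<lambda>a. br b (J a c)) = - (\<Sum>k\<in>Zb. g k k * g c (J k (J k b)))"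
proof -
  have "g (br b (J k c)) k = - g c (J k (J k b))" for k
    using g_jmap[of "J k c" k b] jmap_skew[of k c "J k b"] by simp
  then show ?thesis
    using lin_trace_jmap_compose[OF linear_ident linear_br_right, of b c] by (simp add: sum_negf)
qed

lemma lin_trace_jmap_br_left:
  "lin_trace (\<lambda>a. J (br a c) b) = (\<Sum>k\<in>Zb. g k k * g c (J k (J k b)))"
  using lin_trace_jmap_compose[OF linear_br_left linear_ident, of c b] g_jmap[of c _ "J _ b"] by simp

lemma ricci_eq: "ricci br g b c =
    (1/2) * (\<Sum>k\<in>Zb. g k k * g b (J k (J k c))) - (1/4) * lin_trace (\<lambda>a. J b (J c a))"
proof -
  have "ricci br g b c = lin_trace (\<lambda>a.
     - (1/4) *\<^sub>R br a (J c b) - (1/4) *\<^sub>R br a (J b c) - (1/4) *\<^sub>R J (br b c) a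
     + (1/4) *\<^sub>R J a (J c b) + (1/4) *\<^sub>R J a (J b c)
     + (1/4) *\<^sub>R br b (J c a) + (1/4) *\<^sub>R br b (J a c) + (1/4) *\<^sub>R J (br a c) b
     - (1/4) *\<^sub>R J b (J c a) - (1/4) *\<^sub>R J b (J a c) + (1/2) *\<^sub>R J (br a b) c)"
    unfolding ricci_def curv_eq ..
  also have "\<dots> = - (1/4) * lin_trace (\<lambda>a. br a (J c b)) - (1/4) * lin_trace (\<lambda>a. br a (J b c))
     - (1/4) * lin_trace (\<lambda>a. J (br b c) a)
     + (1/4) * lin_trace (\<lambda>a. J a (J c b)) + (1/4) * lin_trace (\<lambda>a. J a (J b c))
     + (1/4) * lin_trace (\<lambda>a. br b (J c a)) + (1/4) * lin_trace (\<lambda>a. br b (J a c))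
     + (1/4) * lin_trace (\<lambda>a. J (br a c) b)
     - (1/4) * lin_trace (\<lambda>a. J b (J c a)) - (1/4) * lin_trace (\<lambda>a. J b (J a c))
     + (1/2) * lin_trace (\<lambda>a. J (br a b) c)"
    by (simp only: lin_trace_add lin_trace_diff lin_trace_scaleR)
  \<comment> \<open>seven traces vanish, and those of \<open>br b (J a c)\<close> and \<open>J (br a c) b\<close> cancel\<close>
  also have "\<dots> = (1/2) * (\<Sum>k\<in>Zb. g k k * g b (J k (J k c))) - (1/4) * lin_trace (\<lambda>a. J b (J c a))"
    using lin_trace_jmap_left_V[OF linear_ident, of "J c b"] lin_trace_jmap_left_V[OF linear_ident, of "J b c"]
      lin_trace_jmap_left_V[OF linear_jmap, of b c]
    by (simp add: lin_trace_br_left lin_trace_jmap_right lin_trace_br_jmap_right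
        lin_trace_br_jmap_left lin_trace_jmap_br_left)
  finally show ?thesis .
qed

lemma ricci_op_eqI: "(\<And>y. g w y = ricci br g x y) \<Longrightarrow> ricci_op br g x = w"
  unfolding ricci_op_def by (rule the_equality) (auto intro: inner_prod_eqI[OF metric])

lemma dim_V: "dim V = DIM('a) - card Zb"
proof -
  have "{x + y |x y. x \<in> Z \<and> y \<in> V} = UNIV"
    using proj_Z_plus_proj_V proj_Z_in_center proj_V_in_V
    by (metis (mono_tags, lifting) UNIV_eq_I mem_Collect_eq)
  moreover have "Z \<inter> V = {0}"
    using center_nondegenerateD g_V_center subspace_0[OF subspace_center] subspace_0[OF subspace_V]
    by auto
  moreover have "dim Z = card Zb"
    using center_basis dim_span_eq_card_independent span_Zb
    by (metis pseudo_orthonormal_basis_def)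
  ultimately show ?thesis
    using dim_sums_Int[OF subspace_center subspace_V] by (simp add: dim_UNIV)
qed

lemma lin_trace_proj_V: "lin_trace proj_V = real (dim V)"
proof -
  have "lin_trace proj_Z = (\<Sum>k\<in>Zb. g k k * g k k)"
    unfolding proj_Z_def
    using lin_trace_sum_rank_one[OF finite_Zb linear_g_left_scaled[OF linear_ident]] by simp
  also have "\<dots> = real (card Zb)"
    using Zb_sign_square by simp
  finally have "lin_trace proj_Z = real (card Zb)" .
  moreover have "card Zb \<le> DIM('a)"
    using center_basis independent_bound_general[of Zb] dim_subset_UNIV[of Zb]
    by (simp add: pseudo_orthonormal_basis_def)
  ultimately show ?thesis
    using lin_trace_diff[of "\<lambda>a. a" proj_Z] lin_trace_id dim_V by (simp add: proj_V_def[abs_def])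
qed

end

locale modified_H_type_algebra = metric_two_step_nilpotent br g Zb
  for br :: "'a::euclidean_space \<Rightarrow> 'a \<Rightarrow> 'a" and g Zb +
  fixes \<phi> :: "'a \<Rightarrow> real" and B :: "'a \<Rightarrow> 'a \<Rightarrow> real"
  assumes bilinear_B: "bilinear B"
    and B_sym: "B x y = B y x"
    and \<phi>_eq_B: "z \<in> center br \<Longrightarrow> \<phi> z = B z z"
    and jmap_square:
      "z \<in> center br \<Longrightarrow> x \<in> orth_compl g (center br) \<Longrightarrow>
        jmap br g z (jmap br g z x) = - \<phi> z *\<^sub>R x"
begin

lemmas B_simps = bilinear_ladd[OF bilinear_B] bilinear_radd[OF bilinear_B]
  bilinear_lmul[OF bilinear_B] bilinear_rmul[OF bilinear_B] bilinear_lzero[OF bilinear_B]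

definition xi :: real where
  "xi = (\<Sum>u\<in>Zb. g u u * \<phi> u)"

lemma polar_eq_B: "z \<in> Z \<Longrightarrow> z' \<in> Z \<Longrightarrow> polar \<phi> z z' = B z z'"
  using \<phi>_eq_B subspace_add[OF subspace_center] B_sym[of z' z]
  by (simp add: polar_def B_simps)

lemma jmap_square_proj_V: "z \<in> Z \<Longrightarrow> J z (J z x) = - \<phi> z *\<^sub>R proj_V x"
  using jmap_square[of z "proj_V x"] jmap_proj_V_right[of z x] by simp

lemma jmap_anticommute:
  assumes "z \<in> Z" and "z' \<in> Z"
  shows "J z (J z' x) + J z' (J z x) = - (2 * B z z') *\<^sub>R proj_V x"
proof -
  have "J (z + z') (J (z + z') x) = J z (J z x) + J z' (J z' x) + (J z (J z' x) + J z' (J z x))"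
    by (simp add: jmap_simps)
  moreover have "\<phi> (z + z') = \<phi> z + \<phi> z' + 2 * B z z'"
    using assms \<phi>_eq_B subspace_add[OF subspace_center] B_sym[of z' z] by (simp add: B_simps)
  ultimately show ?thesis
    using assms jmap_square_proj_V subspace_add[OF subspace_center]
    by (simp add: algebra_simps)
qed

lemma lin_trace_jmap_jmap: "lin_trace (\<lambda>a. J b (J c a)) = - real (dim V) * B (proj_Z b) (proj_Z c)"
proof -
  define zb zc where "zb = proj_Z b" and "zc = proj_Z c"
  have "lin_trace (\<lambda>a. J zb (J zc a)) = lin_trace (\<lambda>a. J zc (J zb a))"
    by (rule lin_trace_eq_adjoint[OF metric])
      (simp_all add: linear_compose[OF linear_jmap linear_jmap, unfolded o_def] jmap_skew)
  moreover have "lin_trace (\<lambda>a. J zb (J zc a)) + lin_trace (\<lambda>a. J zc (J zb a))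
      = - (2 * B zb zc) * real (dim V)"
    using jmap_anticommute[of zb zc] lin_trace_scaleR[of _ proj_V]
    by (simp add: zb_def zc_def lin_trace_add[symmetric] lin_trace_minus lin_trace_proj_V)
  ultimately show ?thesis
    by (simp add: zb_def zc_def jmap_proj_Z_left)
qed

lemma ricci_modified_H_type:
  "ricci br g b c = - (xi / 2) * g b (proj_V c) + (real (dim V) / 4) * B (proj_Z b) (proj_Z c)"
proof -
  have "(\<Sum>k\<in>Zb. g k k * g b (J k (J k c))) = - xi * g b (proj_V c)"
    by (simp add: jmap_square_proj_V Zb_subset_center g_simps xi_def sum_distrib_right sum_negf
        mult.assoc)
  then show ?thesis
    by (simp add: ricci_eq lin_trace_jmap_jmap)
qed

definition dagger :: "'a \<Rightarrow> 'a" where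
  "dagger z = (\<Sum>k\<in>Zb. (g k k * B z k) *\<^sub>R k)"

lemma dagger_in_center: "dagger z \<in> Z"
  unfolding dagger_def span_Zb[symmetric] by (intro span_sum span_scale span_base)

lemma dagger_zero: "dagger 0 = 0"
  by (simp add: dagger_def B_simps)

lemma g_dagger: "g (dagger z) y = B z (proj_Z y)"
  unfolding dagger_def proj_Z_def bilinear_sum_left[OF bilinear_g] bilinear_sum_right[OF bilinear_B]
  by (simp add: g_simps B_simps g_sym[of _ y] algebra_simps)

lemma Id_dagger_eq: assumes "z \<in> Z" shows "Id_dagger br g \<phi> z = dagger z"
  unfolding Id_dagger_def
proof (rule the_equality)
  show "dagger z \<in> Z \<and> (\<forall>z'\<in>Z. g (dagger z) z' = polar \<phi> z z')"
    using assms by (simp add: dagger_in_center g_dagger polar_eq_B proj_Z_center)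
  fix w assume w: "w \<in> Z \<and> (\<forall>z'\<in>Z. g w z' = polar \<phi> z z')"
  have "w - dagger z = 0"
  proof (rule center_nondegenerateD)
    show "w - dagger z \<in> Z"
      using w dagger_in_center subspace_center by (simp add: subspace_diff)
    show "g (w - dagger z) y = 0" if "y \<in> Z" for y
      using w that assms by (simp add: g_simps g_dagger polar_eq_B proj_Z_center)
  qed
  then show "w = dagger z" by simp
qed

lemma ricci_op_modified_H_type:
  "ricci_op br g b = - (xi / 2) *\<^sub>R proj_V b + (real (dim V) / 4) *\<^sub>R dagger (proj_Z b)"
  by (rule ricci_op_eqI) (simp add: ricci_modified_H_type g_simps g_dagger g_proj_V)

end

theorem theorem3p5:
  fixes br :: "'a::euclidean_space \<Rightarrow> 'a \<Rightarrow> 'a"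
    and g :: "'a \<Rightarrow> 'a \<Rightarrow> real"
    and \<phi> :: "'a \<Rightarrow> real"
    and Zb :: "'a set"
  assumes "modified_H_type br g \<phi>"
    and "pseudo_orthonormal_basis g (center br) Zb"
  shows "(\<forall>z\<in>center br. ricci_op br g z \<in> center br)
       \<and> (\<forall>x\<in>orth_compl g (center br). ricci_op br g x \<in> orth_compl g (center br))
       \<and> (\<forall>x\<in>orth_compl g (center br).
            ricci_op br g x = - ((\<Sum>u\<in>Zb. g u u * \<phi> u) / 2) *\<^sub>R x)
       \<and> (\<forall>z\<in>center br.
            ricci_op br g z = (real (dim (orth_compl g (center br))) / 4) *\<^sub>R Id_dagger br g \<phi> z)"
proof -
  obtain B where "bilinear B" "\<And>x y. B x y = B y x" "\<And>z. z \<in> center br \<Longrightarrow> \<phi> z = B z z"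
    using assms(1) unfolding modified_H_type_def quadratic_form_on_def by blast
  then interpret modified_H_type_algebra br g Zb \<phi> B
    using assms unfolding modified_H_type_def by unfold_locales auto
  have on_center: "ricci_op br g z = (real (dim V) / 4) *\<^sub>R dagger z" if "z \<in> Z" for z
    using that by (simp add: ricci_op_modified_H_type proj_Z_center proj_V_center)
  have on_V: "ricci_op br g x = - (xi / 2) *\<^sub>R x" if "x \<in> V" for x
    using that by (simp add: ricci_op_modified_H_type proj_Z_V proj_V_V dagger_zero)
  show ?thesis
    using on_center on_V dagger_in_center Id_dagger_eq subspace_center subspace_V
    by (auto simp: xi_def subspace_scale subspace_neg)
qed

end
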